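(* Let $A\in\mathbb Z^{d\times n}$ with $\ker(A)\cap\mathbb N^n=\{0\}$. If a set of moves $B\subseteq\ker(A)$ reduces the distance of the Graver basis $G(A)$, then $B$ is a Markov basis of $A$.
   Context: For $z\in\mathbb Z^n$, $z^\pm\in\mathbb N^n$ are the unique vectors with disjoint supports and $z=z^+-z^-$; $\|\cdot\|$ is the $1$-norm. A Markov basis is a set $B\subseteq\ker(A)$ such that $\{x^{u^+}-x^{u^-}:u\in B\}$ generates the toric ideal $I_A=\langle x^{u^+}-x^{u^-}:u\in\ker(A)\rangle$. The Graver basis $G(A)$ is the set of nonzero $z\in\ker(A)$ admitting no decomposition $z=u+v$ with $u,v\in\ker(A)\setminus\{0\}$, $z^+=u^++v^+$, $z^-=u^-+v^-$. For nonzero $z\in\ker(A)$, $u\in\ker(A)$ reduces the distance of $z$ if there exist $(p,q)\in\{(z^+,z^-),(z^-,z^+)\}$ and $\varepsilon\in\{\pm1\}$ with $p+\varepsilon u\in\mathbb N^n$ and $\|p+\varepsilon u-q\|<\|z\|$; $B$ reduces the distance of $Z$ if every nonzero $z\in Z$ has its distance reduced by some element of $B$. *)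

theory Defs
  imports "HOL-Analysis.Analysis" "HOL-Library.Poly_Mapping"
begin

definition kerZ :: "int^'n^'d \<Rightarrow> (int^'n) set" where
  "kerZ A = {z. A *v z = 0}"

definition natvec :: "int^'n \<Rightarrow> bool" where
  "natvec p \<longleftrightarrow> (\<forall>i. 0 \<le> p $ i)"

definition pos_part :: "int^'n \<Rightarrow> int^'n" where
  "pos_part z = (\<chi> i. max (z $ i) 0)"

definition neg_part :: "int^'n \<Rightarrow> int^'n" where
  "neg_part z = (\<chi> i. max (- (z $ i)) 0)"

definition norm1 :: "int^'n::finite \<Rightarrow> int" where
  "norm1 z = (\<Sum>i\<in>UNIV. \<bar>z $ i\<bar>)"

text \<open>Polynomial ring k[x_i : i in 'n]: monomials are exponent vectors 'n =>0 nat.\<close>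

definition mono :: "int^'n \<Rightarrow> (('n \<Rightarrow>\<^sub>0 nat) \<Rightarrow>\<^sub>0 'k::field)" where
  "mono u = Poly_Mapping.single (Abs_poly_mapping (\<lambda>i. nat (u $ i))) 1"

definition binom :: "int^'n \<Rightarrow> (('n \<Rightarrow>\<^sub>0 nat) \<Rightarrow>\<^sub>0 'k::field)" where
  "binom u = mono (pos_part u) - mono (neg_part u)"

definition ideal_gen :: "'a::comm_ring_1 set \<Rightarrow> 'a set" where
  "ideal_gen S = {(\<Sum>p\<in>F. c p * p) | F c. finite F \<and> F \<subseteq> S}"

definition toric_ideal :: "int^'n::finite^'d \<Rightarrow> (('n \<Rightarrow>\<^sub>0 nat) \<Rightarrow>\<^sub>0 'k::field) set" where
  "toric_ideal A = ideal_gen (binom ` kerZ A)"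

definition markov_basis :: "int^'n::finite^'d \<Rightarrow> (int^'n) set \<Rightarrow> 'k::field itself \<Rightarrow> bool" where
  "markov_basis A B (_::'k itself) \<longleftrightarrow>
     B \<subseteq> kerZ A \<and> ideal_gen ((binom :: _ \<Rightarrow> _ \<Rightarrow>\<^sub>0 'k) ` B) = toric_ideal A"

definition graver_basis :: "int^'n::finite^'d \<Rightarrow> (int^'n) set" where
  "graver_basis A = {z \<in> kerZ A. z \<noteq> 0 \<and>
     \<not> (\<exists>u v. u \<in> kerZ A \<and> v \<in> kerZ A \<and> u \<noteq> 0 \<and> v \<noteq> 0 \<and> z = u + v \<and>
            pos_part z = pos_part u + pos_part v \<and> neg_part z = neg_part u + neg_part v)}"

definition reduces_distance :: "int^'n::finite \<Rightarrow> int^'n \<Rightarrow> bool" where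
  "reduces_distance u z \<longleftrightarrow>
     (\<exists>(p, q)\<in>{(pos_part z, neg_part z), (neg_part z, pos_part z)}.
        \<exists>\<epsilon>\<in>{1::int, -1}. natvec (p + \<epsilon> *s u) \<and> norm1 (p + \<epsilon> *s u - q) < norm1 z)"

definition set_reduces_distance :: "int^'n::finite^'d \<Rightarrow> (int^'n) set \<Rightarrow> (int^'n) set \<Rightarrow> bool" where
  "set_reduces_distance A B Z \<longleftrightarrow>
     (\<forall>z\<in>Z. z \<noteq> 0 \<longrightarrow> (\<exists>u\<in>B. reduces_distance u z))"

end

theory Submission
  imports Defs
begin

text \<open>
  Every nonzero z in the kernel dominates, in the conformal order, some Graver element g;
  a move that reduces the distance of g reduces that of z by at least as much, because
  z and z - g have no cancellation in the 1-norm. So B reduces the distance of the whole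
  kernel, and an induction on the distance writes each binomial of the kernel as a
  combination of binomials of B: subtracting a move splits x^p - x^q into two binomials
  times monomials, one from B and one of smaller distance.
\<close>

lemma kerZ_add: "x \<in> kerZ A \<Longrightarrow> y \<in> kerZ A \<Longrightarrow> x + y \<in> kerZ A"
  by (simp add: kerZ_def matrix_vector_right_distrib)

lemma kerZ_scale: "x \<in> kerZ A \<Longrightarrow> c *s x \<in> kerZ A"
  by (simp add: kerZ_def vec_eq_iff matrix_vector_mult_def sum_distrib_left[symmetric] mult.left_commute)

lemma kerZ_uminus: "x \<in> kerZ A \<Longrightarrow> - x \<in> kerZ A"
  using kerZ_scale[of x A "-1"] by (simp add: vector_sneg_minus1)

lemma pos_part_uminus [simp]: "pos_part (- z) = neg_part z"
  and neg_part_uminus [simp]: "neg_part (- z) = pos_part z"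
  by (simp_all add: pos_part_def neg_part_def)

lemma pos_part_add_minus_neg_part: "pos_part z + v - neg_part z = z + v"
  by (simp add: vec_eq_iff pos_part_def neg_part_def max_def)

lemma natvec_pos_part: "natvec (pos_part z)"
  and natvec_neg_part: "natvec (neg_part z)"
  by (simp_all add: natvec_def pos_part_def neg_part_def)

lemma norm1_nonneg: "0 \<le> norm1 x"
  by (simp add: norm1_def sum_nonneg)

lemma norm1_pos: "x \<noteq> 0 \<Longrightarrow> 0 < norm1 x"
proof -
  assume "x \<noteq> 0"
  then obtain i where "x $ i \<noteq> 0" by (auto simp: vec_eq_iff)
  then have "0 < \<bar>x $ i\<bar>" by simp
  also have "\<bar>x $ i\<bar> \<le> norm1 x"
    unfolding norm1_def by (rule member_le_sum) auto
  finally show ?thesis .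
qed

lemma norm1_uminus [simp]: "norm1 (- x) = norm1 x"
  by (simp add: norm1_def)

lemma norm1_triangle: "norm1 (x + y) \<le> norm1 x + norm1 y"
  unfolding norm1_def sum.distrib[symmetric] by (rule sum_mono) (simp add: abs_triangle_ineq)

definition conformal :: "int^'n \<Rightarrow> int^'n \<Rightarrow> bool" where
  "conformal g z \<longleftrightarrow> (\<forall>i. pos_part g $ i \<le> pos_part z $ i \<and> neg_part g $ i \<le> neg_part z $ i)"

lemma conformal_refl: "conformal z z"
  by (simp add: conformal_def)

lemma conformal_trans: "conformal u g \<Longrightarrow> conformal g z \<Longrightarrow> conformal u z"
  by (meson conformal_def order_trans)

lemma conformal_uminus: "conformal g z \<Longrightarrow> conformal (- g) (- z)"
  by (simp add: conformal_def)

lemma conformal_norm1: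
  assumes "conformal g z"
  shows "norm1 z = norm1 g + norm1 (z - g)"
proof -
  have "\<bar>z $ i\<bar> = \<bar>g $ i\<bar> + \<bar>(z - g) $ i\<bar>" for i
    using assms[unfolded conformal_def, rule_format, of i] by (auto simp: pos_part_def neg_part_def)
  then show ?thesis by (simp add: norm1_def sum.distrib)
qed

lemma conformal_if_sum_of_parts:
  assumes "pos_part g = pos_part u + pos_part v" "neg_part g = neg_part u + neg_part v"
  shows "conformal u g"
  using assms by (auto simp: conformal_def vec_eq_iff pos_part_def neg_part_def)

text \<open>A nonzero kernel element below z of least 1-norm is in the Graver basis, because the
  summands of a conformal decomposition have strictly smaller norm.\<close>

lemma graver_basis_conformal_below:
  assumes "z \<in> kerZ A" "z \<noteq> 0"
  obtains g where "g \<in> graver_basis A" "conformal g z"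
proof -
  let ?P = "\<lambda>g. g \<in> kerZ A \<and> g \<noteq> 0 \<and> conformal g z"
  have "?P z" using assms by (simp add: conformal_refl)
  then obtain g where g: "?P g" and least: "\<And>y. ?P y \<Longrightarrow> nat (norm1 g) \<le> nat (norm1 y)"
    using ex_has_least_nat[of ?P z "\<lambda>g. nat (norm1 g)"] by blast
  have False
    if "u \<in> kerZ A" "u \<noteq> 0" "v \<noteq> 0" "g = u + v"
      and parts: "pos_part g = pos_part u + pos_part v" "neg_part g = neg_part u + neg_part v"
    for u v
  proof -
    have "conformal u g" using conformal_if_sum_of_parts[OF parts] .
    then have "norm1 g = norm1 u + norm1 v"
      using conformal_norm1 that(4) by force
    moreover have "nat (norm1 g) \<le> nat (norm1 u)"
      using least that(1,2) conformal_trans[OF \<open>conformal u g\<close>] g by blast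
    ultimately show False using norm1_pos[OF that(3)] norm1_nonneg[of u] by linarith
  qed
  then have "g \<in> graver_basis A" using g unfolding graver_basis_def by blast
  with g show thesis using that by blast
qed

definition reduces_from_pos :: "int^'n::finite \<Rightarrow> int^'n \<Rightarrow> bool" where
  "reduces_from_pos u z \<longleftrightarrow>
     (\<exists>\<epsilon>\<in>{1::int, -1}. natvec (pos_part z + \<epsilon> *s u) \<and> norm1 (z + \<epsilon> *s u) < norm1 z)"

lemma reduces_distance_iff:
  fixes u z :: "int^'n::finite"
  shows "reduces_distance u z \<longleftrightarrow> reduces_from_pos u z \<or> reduces_from_pos u (- z)"
  using pos_part_add_minus_neg_part[of z] pos_part_add_minus_neg_part[of "- z"]
  unfolding reduces_distance_def reduces_from_pos_def pos_part_uminus neg_part_uminus norm1_uminus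
  by (simp only: bex_simps bex_empty prod.case simp_thms)

lemma reduces_from_pos_conformal:
  assumes "reduces_from_pos u g" "conformal g z"
  shows "reduces_from_pos u z"
proof -
  obtain \<epsilon> where e: "\<epsilon> \<in> {1, -1}" and nat_g: "natvec (pos_part g + \<epsilon> *s u)"
    and lt: "norm1 (g + \<epsilon> *s u) < norm1 g"
    using assms(1) unfolding reduces_from_pos_def by blast
  have "natvec (pos_part z + \<epsilon> *s u)"
    unfolding natvec_def
  proof
    fix i
    have "0 \<le> pos_part g $ i + \<epsilon> * u $ i" using nat_g by (simp add: natvec_def)
    moreover have "pos_part g $ i \<le> pos_part z $ i" using assms(2) by (simp add: conformal_def)
    ultimately show "0 \<le> (pos_part z + \<epsilon> *s u) $ i" by simp
  qed
  moreover have "norm1 (z + \<epsilon> *s u) < norm1 z"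
  proof -
    have "norm1 (z + \<epsilon> *s u) \<le> norm1 (g + \<epsilon> *s u) + norm1 (z - g)"
      using norm1_triangle[of "g + \<epsilon> *s u" "z - g"] by (simp add: add.commute)
    then show ?thesis using lt conformal_norm1[OF assms(2)] by linarith
  qed
  ultimately show ?thesis using e unfolding reduces_from_pos_def by blast
qed

lemma reduces_distance_conformal:
  assumes "reduces_distance u g" "conformal g z"
  shows "reduces_distance u z"
proof -
  have "reduces_from_pos u g \<or> reduces_from_pos u (- g)"
    using assms(1) by (simp only: reduces_distance_iff)
  then show ?thesis
    using reduces_from_pos_conformal[OF _ assms(2)]
      reduces_from_pos_conformal[OF _ conformal_uminus[OF assms(2)]]
    by (simp only: reduces_distance_iff) iprover
qed

lemma reduces_distance_kernel:
  assumes "set_reduces_distance A B (graver_basis A)" "z \<in> kerZ A" "z \<noteq> 0"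
  obtains u where "u \<in> B" "reduces_distance u z"
proof -
  obtain g where g: "g \<in> graver_basis A" "conformal g z"
    using graver_basis_conformal_below assms(2,3) by blast
  then have "g \<noteq> 0" by (simp add: graver_basis_def)
  then obtain u where "u \<in> B" "reduces_distance u g"
    using assms(1) g(1) unfolding set_reduces_distance_def by blast
  then show thesis using that reduces_distance_conformal[OF _ g(2)] by blast
qed

interpretation ring_module: module "(*) :: 'a::comm_ring_1 \<Rightarrow> 'a \<Rightarrow> 'a"
  by unfold_locales (auto simp: algebra_simps)

lemma ideal_gen_eq_span: "ideal_gen S = ring_module.span S"
  unfolding ideal_gen_def ring_module.span_explicit by auto

lemma mono_add_eq_mult:
  assumes "natvec a" "natvec b"
  shows "(mono (a + b) :: _ \<Rightarrow>\<^sub>0 'k::field) = mono a * mono b"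
proof -
  have "Abs_poly_mapping (\<lambda>i. nat ((a + b) $ i)) =
        Abs_poly_mapping (\<lambda>i. nat (a $ i)) + Abs_poly_mapping (\<lambda>i. nat (b $ i))"
    using assms by (intro poly_mapping_eqI) (simp add: lookup_add natvec_def nat_add_distrib)
  then show ?thesis by (simp add: mono_def mult_single)
qed

lemma binom_uminus: "(binom (- x) :: _ \<Rightarrow>\<^sub>0 'k::field) = - binom x"
  by (simp add: binom_def)

lemma binom_zero: "(binom 0 :: _ \<Rightarrow>\<^sub>0 'k::field) = 0"
  by (simp add: binom_def pos_part_def neg_part_def)

lemma mono_diff_eq_mono_mult_binom:
  assumes "natvec a" "natvec b"
  shows "(mono a - mono b :: _ \<Rightarrow>\<^sub>0 'k::field) = mono (\<chi> i. min (a $ i) (b $ i)) * binom (a - b)"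
proof -
  let ?m = "\<chi> i. min (a $ i) (b $ i)"
  have m: "natvec ?m" using assms by (simp add: natvec_def)
  have "a = ?m + pos_part (a - b)" "b = ?m + neg_part (a - b)"
    by (auto simp: vec_eq_iff pos_part_def neg_part_def)
  then have "(mono a :: _ \<Rightarrow>\<^sub>0 'k) = mono ?m * mono (pos_part (a - b))"
    "(mono b :: _ \<Rightarrow>\<^sub>0 'k) = mono ?m * mono (neg_part (a - b))"
    using mono_add_eq_mult[OF m natvec_pos_part] mono_add_eq_mult[OF m natvec_neg_part] by metis+
  then show ?thesis by (simp add: binom_def right_diff_distrib)
qed

lemma mono_diff_in_span:
  assumes "natvec a" "natvec b" "(binom (a - b) :: _ \<Rightarrow>\<^sub>0 'k::field) \<in> ring_module.span S"
  shows "(mono a - mono b :: _ \<Rightarrow>\<^sub>0 'k::field) \<in> ring_module.span S"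
  using ring_module.span_scale[OF assms(3)] mono_diff_eq_mono_mult_binom[OF assms(1,2)] by metis

text \<open>If w reduces from p = pos_part w to r = p + \<epsilon> u, then
  x^p - x^q = (x^p - x^r) + (x^r - x^q) with q = neg_part w, and the two differences are
  monomial multiples of binom (-\<epsilon> u) and of binom (w + \<epsilon> u), whose distance is smaller.\<close>

lemma binom_in_span_if_reduces_distance:
  assumes reduces: "\<And>z. z \<in> kerZ A \<Longrightarrow> z \<noteq> 0 \<Longrightarrow> \<exists>u\<in>B. reduces_distance u z"
    and "B \<subseteq> kerZ A" "z \<in> kerZ A"
  shows "(binom z :: _ \<Rightarrow>\<^sub>0 'k::field) \<in> ring_module.span (binom ` B)"
  using assms(3)
proof (induction "nat (norm1 z)" arbitrary: z rule: less_induct)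
  case less
  let ?S = "ring_module.span ((binom :: _ \<Rightarrow> _ \<Rightarrow>\<^sub>0 'k) ` B)"
  have pos_case: "(binom w :: _ \<Rightarrow>\<^sub>0 'k) \<in> ?S"
    if uB: "u \<in> B" and red: "reduces_from_pos u w" and wK: "w \<in> kerZ A"
      and wz: "norm1 w = norm1 z" for u w
  proof -
    obtain \<epsilon> where e: "\<epsilon> \<in> {1, -1}" and r: "natvec (pos_part w + \<epsilon> *s u)"
      and lt: "norm1 (w + \<epsilon> *s u) < norm1 w"
      using red unfolding reduces_from_pos_def by blast
    have "(binom u :: _ \<Rightarrow>\<^sub>0 'k) \<in> ?S"
      using uB by (intro ring_module.span_base) blast
    then have "(binom (\<epsilon> *s u) :: _ \<Rightarrow>\<^sub>0 'k) \<in> ?S"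
      using e ring_module.span_neg by (auto simp: vector_sneg_minus1[symmetric] binom_uminus)
    then have "(binom (pos_part w - (pos_part w + \<epsilon> *s u)) :: _ \<Rightarrow>\<^sub>0 'k) \<in> ?S"
      using ring_module.span_neg by (fastforce simp: binom_uminus)
    moreover have "w + \<epsilon> *s u \<in> kerZ A"
      using kerZ_add kerZ_scale uB wK assms(2) by blast
    then have "(binom (pos_part w + \<epsilon> *s u - neg_part w) :: _ \<Rightarrow>\<^sub>0 'k) \<in> ?S"
      using less.hyps[of "w + \<epsilon> *s u"] lt wz norm1_nonneg[of "w + \<epsilon> *s u"]
      by (simp add: pos_part_add_minus_neg_part)
    ultimately have "(mono (pos_part w) - mono (pos_part w + \<epsilon> *s u)) +
        (mono (pos_part w + \<epsilon> *s u) - mono (neg_part w) :: _ \<Rightarrow>\<^sub>0 'k) \<in> ?S"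
      by (intro ring_module.span_add mono_diff_in_span r natvec_pos_part natvec_neg_part)
    then show ?thesis by (simp add: binom_def)
  qed
  show ?case
  proof (cases "z = 0")
    case True
    then show ?thesis by (simp add: binom_zero ring_module.span_zero)
  next
    case False
    then obtain u where u: "u \<in> B" "reduces_distance u z" using reduces less.prems by blast
    then consider "reduces_from_pos u z" | "reduces_from_pos u (- z)"
      using reduces_distance_iff by blast
    then show ?thesis
    proof cases
      case 1
      then show ?thesis using pos_case u(1) less.prems by blast
    next
      case 2
      then have "(binom (- z) :: _ \<Rightarrow>\<^sub>0 'k) \<in> ?S"
        using pos_case[OF u(1) 2 kerZ_uminus[OF less.prems]] by simp
      then show ?thesis using ring_module.span_neg by (fastforce simp: binom_uminus)
    qed
  qed
qed

theorem corollary7p6: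
  fixes A :: "int^'n::finite^'d::finite" and B :: "(int^'n) set"
  assumes "kerZ A \<inter> {z. natvec z} = {0}"
    and "B \<subseteq> kerZ A"
    and "set_reduces_distance A B (graver_basis A)"
  shows "markov_basis A B TYPE('k::field)"
proof -
  let ?b = "binom :: _ \<Rightarrow> _ \<Rightarrow>\<^sub>0 'k"
  have "\<exists>u\<in>B. reduces_distance u z" if "z \<in> kerZ A" "z \<noteq> 0" for z
    using reduces_distance_kernel[OF assms(3) that] by blast
  then have "?b ` kerZ A \<subseteq> ring_module.span (?b ` B)"
    using binom_in_span_if_reduces_distance[OF _ assms(2)] by blast
  then have "ring_module.span (?b ` kerZ A) \<subseteq> ring_module.span (?b ` B)"
    by (rule ring_module.span_minimal) simp
  moreover have "ring_module.span (?b ` B) \<subseteq> ring_module.span (?b ` kerZ A)"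
    using assms(2) by (intro ring_module.span_mono) blast
  ultimately show ?thesis
    unfolding markov_basis_def toric_ideal_def ideal_gen_eq_span using assms(2) by blast
qed

end
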